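(* Let $X$ be a random variable taking values in $\mathbb{R}^n$ with a density $f$ with respect to Lebesgue measure, let $\varphi:\mathbb{R}^n\to\mathbb{R}$ be measurable, and let $a,b>0$. Assume $\mathbb{E}\, e^{\alpha\varphi(X)}<\infty$ for all $\alpha\in(-a,b)$, and let $c:(-a,b)\to\mathbb{R}$ be a smooth function such that $\alpha\mapsto e^{-c(\alpha)}\,\mathbb{E}\, e^{\alpha\varphi(X)}$ is log-concave on $(-a,b)$. Set $\psi_c(\alpha)=c(\alpha)-c(0)-c'(0)\alpha$, let $\psi_{c,+}$ be the restriction of $\psi_c$ to $(0,b)$ and $\psi_{c,-}$ its restriction to $(-a,0)$. Then for every $t>0$, $$\mathbb{P}(\varphi(X)-\mathbb{E}\varphi(X)>t)\le e^{-\psi_{c,+}^*(t)},\qquad \mathbb{P}(\varphi(X)-\mathbb{E}\varphi(X)<-t)\le e^{-\psi_{c,-}^*(-t)},$$ where $\psi_{c,\pm}^*$ denote the Fenchel–Legendre duals.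
   Context: For a function $g$ defined on a subset $D\subseteq\mathbb{R}$ (extended by $+\infty$ outside $D$), its Fenchel–Legendre dual is $g^*(x)=\sup_{y\in D}(xy-g(y))$. A function $g:I\to(0,\infty)$ is log-concave if $\log g$ is concave. *)

theory Defs
  imports "HOL-Probability.Probability"
begin

definition smooth_on_real :: "real set \<Rightarrow> (real \<Rightarrow> real) \<Rightarrow> bool" where
  "smooth_on_real S g \<longleftrightarrow>
     (\<exists>D :: nat \<Rightarrow> real \<Rightarrow> real. (\<forall>x\<in>S. D 0 x = g x) \<and>
        (\<forall>k. \<forall>x\<in>S. (D k has_real_derivative D (Suc k) x) (at x)))"

definition log_concave_on :: "real set \<Rightarrow> (real \<Rightarrow> real) \<Rightarrow> bool" where
  "log_concave_on I g \<longleftrightarrow> (\<forall>x\<in>I. g x > 0) \<and> concave_on I (\<lambda>x. ln (g x))"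

text \<open>Fenchel--Legendre dual of g restricted to D (g extended by +infinity outside D).\<close>
definition fenchel_dual :: "real set \<Rightarrow> (real \<Rightarrow> real) \<Rightarrow> real \<Rightarrow> ereal" where
  "fenchel_dual D g x = (SUP y\<in>D. ereal (x * y - g y))"

definition exp_neg_ereal :: "ereal \<Rightarrow> ereal" where
  "exp_neg_ereal e = (case e of ereal r \<Rightarrow> ereal (exp (- r)) | PInfty \<Rightarrow> 0 | MInfty \<Rightarrow> \<infinity>)"

end

theory Submission
  imports Defs
begin

text \<open>Write \<open>Y = \<phi>(X)\<close>, \<open>m = E Y\<close> and \<open>L(\<alpha>) = E e\<^sup>\<alpha>\<^sup>Y\<close>. By Jensen, \<open>ln L(\<alpha>) - c(\<alpha>) \<ge> \<alpha> m - c(\<alpha>)\<close>,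
  with equality at \<open>\<alpha> = 0\<close>. The left side is concave and the right side is differentiable at 0,
  so the concave function lies below the tangent line of the right side at 0; this is exactly
  \<open>L(\<alpha>) \<le> exp (\<alpha> m + \<psi>\<^sub>c(\<alpha>))\<close>. Chernoff's inequality for each \<open>\<alpha>\<close> of the appropriate sign, optimised
  over \<open>\<alpha>\<close>, then gives both tail bounds in terms of the Fenchel--Legendre duals.\<close>

lemma le_exp_neg_fenchel_dual:
  fixes g :: "real \<Rightarrow> real"
  assumes "D \<noteq> {}" and "p \<ge> 0" and bound: "\<And>y. y \<in> D \<Longrightarrow> p \<le> exp (- (x * y - g y))"
  shows "ereal p \<le> exp_neg_ereal (fenchel_dual D g x)"
proof (cases "p = 0")
  case True
  then show ?thesis by (cases "fenchel_dual D g x") (auto simp: exp_neg_ereal_def)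
next
  case False
  with \<open>p \<ge> 0\<close> have "p > 0" by simp
  have "fenchel_dual D g x \<le> ereal (- ln p)"
    unfolding fenchel_dual_def
  proof (rule SUP_least)
    fix y assume "y \<in> D"
    then have "ln p \<le> - (x * y - g y)"
      using bound \<open>p > 0\<close> by (metis ln_exp ln_le_cancel_iff exp_gt_zero)
    then show "ereal (x * y - g y) \<le> ereal (- ln p)" by simp
  qed
  moreover obtain y where "y \<in> D" using \<open>D \<noteq> {}\<close> by blast
  then have "ereal (x * y - g y) \<le> fenchel_dual D g x"
    unfolding fenchel_dual_def by (rule SUP_upper)
  ultimately obtain r where "fenchel_dual D g x = ereal r" "r \<le> - ln p"
    by (cases "fenchel_dual D g x") auto
  with \<open>p > 0\<close> show ?thesis
    using exp_le_cancel_iff[of "ln p" "- r"] by (simp add: exp_neg_ereal_def)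
qed

lemma fenchel_dual_uminus:
  "fenchel_dual (uminus ` D) (\<lambda>y. g (- y)) x = fenchel_dual D g (- x)"
  by (simp add: fenchel_dual_def image_image)

lemma smooth_on_real_has_deriv:
  assumes "smooth_on_real S c" and "open S" and "x \<in> S"
  shows "(c has_real_derivative deriv c x) (at x)"
proof -
  obtain D where D0: "\<forall>z\<in>S. D 0 z = c z"
    and D: "\<forall>k. \<forall>z\<in>S. (D k has_real_derivative D (Suc k) z) (at z)"
    using assms(1) unfolding smooth_on_real_def by blast
  have "(D 0 has_real_derivative D 1 x) (at x)"
    using D \<open>x \<in> S\<close> by simp
  then have "(c has_real_derivative D 1 x) (at x)"
    using \<open>open S\<close> \<open>x \<in> S\<close> by (rule has_field_derivative_transform_within_open) (use D0 in simp)
  then show ?thesis by (simp add: DERIV_imp_deriv)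
qed

lemma concave_on_chord:
  fixes h :: "real \<Rightarrow> real"
  assumes "concave_on I h" and "s \<in> I" "r \<in> I" and "s < t" "t < r"
  shows "(t - s) * (h r - h t) \<le> (r - t) * (h t - h s)"
proof -
  have "convex_on I (\<lambda>z. - h z)"
    using assms(1) by (simp add: concave_on_def)
  from convex_on_slope_le[OF this assms(2-5)]
  have "(h t - h s) / (s - t) \<le> (h r - h t) / (t - r)"
    by (simp add: field_simps)
  with assms(4,5) show ?thesis
    by (simp add: field_simps)
qed

lemma concave_on_le_tangent_of_touching:
  fixes h u :: "real \<Rightarrow> real"
  assumes conc: "concave_on I h" and "open I" "x \<in> I" "y \<in> I"
    and below: "\<And>z. z \<in> I \<Longrightarrow> u z \<le> h z" and touch: "u x = h x"
    and der: "(u has_real_derivative d) (at x)"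
  shows "h y \<le> h x + d * (y - x)"
proof -
  define q where "q z = (y - x) * ((u z - u x) / (z - x))" for z
  have q: "(q \<longlongrightarrow> (y - x) * d) (at x)"
    using der unfolding q_def has_field_derivative_iff by (intro tendsto_intros)
  have near: "\<forall>\<^sub>F z in at x. z \<in> I"
    using \<open>open I\<close> \<open>x \<in> I\<close> by (rule eventually_at_in_open')
  consider "y < x" | "y = x" | "x < y" by linarith
  then have "h y - h x \<le> (y - x) * d"
  proof cases
    case 1
    have "\<forall>\<^sub>F z in at_right x. z \<in> I \<and> x < z"
      using near unfolding eventually_at_filter by (rule eventually_mono) auto
    then have "\<forall>\<^sub>F z in at_right x. h y - h x \<le> q z"
    proof (rule eventually_mono, elim conjE)
      fix z assume "z \<in> I" and "x < z"
      have "(x - y) * (u z - u x) \<le> (x - y) * (h z - h x)"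
        using below[OF \<open>z \<in> I\<close>] touch 1 by (intro mult_left_mono) auto
      also have "\<dots> \<le> (z - x) * (h x - h y)"
        using concave_on_chord[OF conc \<open>y \<in> I\<close> \<open>z \<in> I\<close> 1 \<open>x < z\<close>] .
      finally show "h y - h x \<le> q z"
        using \<open>x < z\<close> by (simp add: q_def field_simps)
    qed
    moreover have "(q \<longlongrightarrow> (y - x) * d) (at_right x)"
      using q by (simp add: filterlim_at_split)
    ultimately show ?thesis
      by (intro tendsto_le[OF _ _ tendsto_const]) auto
  next
    case 2
    then show ?thesis by simp
  next
    case 3
    have "\<forall>\<^sub>F z in at_left x. z \<in> I \<and> z < x"
      using near unfolding eventually_at_filter by (rule eventually_mono) auto
    then have "\<forall>\<^sub>F z in at_left x. h y - h x \<le> q z"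
    proof (rule eventually_mono, elim conjE)
      fix z assume "z \<in> I" and "z < x"
      have "(x - z) * (h y - h x) \<le> (y - x) * (h x - h z)"
        using concave_on_chord[OF conc \<open>z \<in> I\<close> \<open>y \<in> I\<close> \<open>z < x\<close> 3] .
      also have "\<dots> \<le> (y - x) * (u x - u z)"
        using below[OF \<open>z \<in> I\<close>] touch 3 by (intro mult_left_mono) auto
      finally show "h y - h x \<le> q z"
        using \<open>z < x\<close> by (simp add: q_def field_simps)
    qed
    moreover have "(q \<longlongrightarrow> (y - x) * d) (at_left x)"
      using q by (simp add: filterlim_at_split)
    ultimately show ?thesis
      by (intro tendsto_le[OF _ _ tendsto_const]) auto
  qed
  then show ?thesis by (simp add: algebra_simps)
qed

lemma (in prob_space) Chernoff_ineq_gt: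
  assumes [measurable]: "Y \<in> borel_measurable M" and "\<alpha> > 0" and int: "integrable M (\<lambda>\<omega>. exp (\<alpha> * Y \<omega>))"
  shows "prob {\<omega>\<in>space M. Y \<omega> > s} \<le> exp (- \<alpha> * s) * expectation (\<lambda>\<omega>. exp (\<alpha> * Y \<omega>))"
proof -
  have "set_integrable M (space M) (\<lambda>\<omega>. exp (\<alpha> * Y \<omega>))"
    unfolding set_integrable_def
    by (rule Bochner_Integration.integrable_cong[THEN iffD1, OF refl _ int]) simp
  then have "prob {\<omega>\<in>space M. Y \<omega> \<ge> s} \<le> exp (- \<alpha> * s) * expectation (\<lambda>\<omega>. exp (\<alpha> * Y \<omega>))"
    using Chernoff_ineq_ge[OF \<open>\<alpha> > 0\<close> _ sets.top, of Y s] set_integral_space[OF int] by simp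
  moreover have "prob {\<omega>\<in>space M. Y \<omega> > s} \<le> prob {\<omega>\<in>space M. Y \<omega> \<ge> s}"
    by (intro finite_measure_mono) auto
  ultimately show ?thesis by linarith
qed

lemma integrable_of_integrable_exp:
  fixes Y :: "'a \<Rightarrow> real"
  assumes "Y \<in> borel_measurable M" and "\<epsilon> > 0"
    and "integrable M (\<lambda>\<omega>. exp (\<epsilon> * Y \<omega>))" "integrable M (\<lambda>\<omega>. exp (- \<epsilon> * Y \<omega>))"
  shows "integrable M Y"
proof (rule Bochner_Integration.integrable_bound)
  show "integrable M (\<lambda>\<omega>. (exp (\<epsilon> * Y \<omega>) + exp (- \<epsilon> * Y \<omega>)) / \<epsilon>)"
    using assms(3,4) by simp
  show "AE \<omega> in M. norm (Y \<omega>) \<le> norm ((exp (\<epsilon> * Y \<omega>) + exp (- \<epsilon> * Y \<omega>)) / \<epsilon>)"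
  proof (rule AE_I2)
    fix \<omega>
    have "\<epsilon> * \<bar>Y \<omega>\<bar> \<le> exp (\<epsilon> * \<bar>Y \<omega>\<bar>)"
      using exp_ge_add_one_self[of "\<epsilon> * \<bar>Y \<omega>\<bar>"] by linarith
    also have "\<dots> \<le> exp (\<epsilon> * Y \<omega>) + exp (- \<epsilon> * Y \<omega>)"
      by (cases "Y \<omega> \<ge> 0") (simp_all add: add_increasing add_increasing2)
    finally show "norm (Y \<omega>) \<le> norm ((exp (\<epsilon> * Y \<omega>) + exp (- \<epsilon> * Y \<omega>)) / \<epsilon>)"
      using \<open>\<epsilon> > 0\<close> by (simp add: field_simps add_pos_pos)
  qed
qed fact

lemma (in prob_space) exp_expectation_le_mgf:
  fixes Y :: "'a \<Rightarrow> real"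
  assumes "integrable M Y" and "integrable M (\<lambda>\<omega>. exp (\<alpha> * Y \<omega>))"
  shows "exp (\<alpha> * expectation Y) \<le> expectation (\<lambda>\<omega>. exp (\<alpha> * Y \<omega>))"
proof -
  have "exp (expectation (\<lambda>\<omega>. \<alpha> * Y \<omega>)) \<le> expectation (\<lambda>\<omega>. exp (\<alpha> * Y \<omega>))"
    using assms exp_convex
    by (intro jensens_inequality[where X = "\<lambda>\<omega>. \<alpha> * Y \<omega>" and q = exp and I = UNIV]) auto
  then show ?thesis by simp
qed

lemma (in prob_space) mgf_le_of_log_concave_tilt:
  fixes Y :: "'a \<Rightarrow> real" and c :: "real \<Rightarrow> real"
  assumes "Y \<in> borel_measurable M" and "open I" "0 \<in> I"
    and int_exp: "\<And>\<alpha>. \<alpha> \<in> I \<Longrightarrow> integrable M (\<lambda>\<omega>. exp (\<alpha> * Y \<omega>))"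
    and der: "(c has_real_derivative d) (at 0)"
    and log_conc: "log_concave_on I (\<lambda>\<alpha>. exp (- c \<alpha>) * expectation (\<lambda>\<omega>. exp (\<alpha> * Y \<omega>)))"
    and "\<beta> \<in> I"
  shows "expectation (\<lambda>\<omega>. exp (\<beta> * Y \<omega>)) \<le> exp (\<beta> * expectation Y + (c \<beta> - c 0 - d * \<beta>))"
proof -
  define L where "L \<alpha> = expectation (\<lambda>\<omega>. exp (\<alpha> * Y \<omega>))" for \<alpha>
  define h where "h \<alpha> = ln (exp (- c \<alpha>) * L \<alpha>)" for \<alpha>
  obtain \<epsilon> where "\<epsilon> > 0" "ball 0 \<epsilon> \<subseteq> I"
    using \<open>open I\<close> \<open>0 \<in> I\<close> open_contains_ball by blast
  then have "\<epsilon> / 2 \<in> I" "- (\<epsilon> / 2) \<in> I" by auto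
  then have int_Y: "integrable M Y"
    using \<open>\<epsilon> > 0\<close> by (intro integrable_of_integrable_exp[of Y M "\<epsilon> / 2"] assms int_exp) auto
  have L_pos: "L \<alpha> > 0" if "\<alpha> \<in> I" for \<alpha>
    using log_conc that unfolding log_concave_on_def L_def by (simp add: zero_less_mult_iff)
  have h_eq: "h \<alpha> = ln (L \<alpha>) - c \<alpha>" if "\<alpha> \<in> I" for \<alpha>
    using L_pos[OF that] by (simp add: h_def ln_mult)
  have "concave_on I h"
    using log_conc unfolding log_concave_on_def h_def L_def by simp
  moreover have "\<alpha> * expectation Y - c \<alpha> \<le> h \<alpha>" if "\<alpha> \<in> I" for \<alpha>
  proof -
    have "exp (\<alpha> * expectation Y) \<le> L \<alpha>"
      unfolding L_def using int_Y int_exp[OF that] by (rule exp_expectation_le_mgf)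
    then have "\<alpha> * expectation Y \<le> ln (L \<alpha>)"
      using L_pos[OF that] by (simp add: ln_ge_iff)
    then show ?thesis using h_eq[OF that] by simp
  qed
  moreover have "((\<lambda>\<alpha>. \<alpha> * expectation Y - c \<alpha>) has_real_derivative expectation Y - d) (at 0)"
    using der by (auto intro!: derivative_eq_intros)
  ultimately have "h \<beta> \<le> h 0 + (expectation Y - d) * (\<beta> - 0)"
    using \<open>open I\<close> \<open>0 \<in> I\<close> \<open>\<beta> \<in> I\<close> h_eq[OF \<open>0 \<in> I\<close>]
    by (intro concave_on_le_tangent_of_touching) (auto simp: L_def prob_space)
  then have "ln (L \<beta>) \<le> \<beta> * expectation Y + (c \<beta> - c 0 - d * \<beta>)"
    using h_eq \<open>0 \<in> I\<close> \<open>\<beta> \<in> I\<close> by (simp add: L_def prob_space algebra_simps)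
  then show ?thesis
    using L_pos[OF \<open>\<beta> \<in> I\<close>] unfolding L_def by (metis exp_le_cancel_iff exp_ln)
qed

lemma (in prob_space) prob_tail_le_exp_neg_fenchel_dual:
  fixes Y :: "'a \<Rightarrow> real" and g :: "real \<Rightarrow> real"
  assumes "Y \<in> borel_measurable M" and "D \<noteq> {}" "D \<subseteq> {0<..}"
    and int_exp: "\<And>\<alpha>. \<alpha> \<in> D \<Longrightarrow> integrable M (\<lambda>\<omega>. exp (\<alpha> * Y \<omega>))"
    and mgf: "\<And>\<alpha>. \<alpha> \<in> D \<Longrightarrow> expectation (\<lambda>\<omega>. exp (\<alpha> * Y \<omega>)) \<le> exp (\<alpha> * m + g \<alpha>)"
  shows "ereal (prob {\<omega>\<in>space M. Y \<omega> > m + t}) \<le> exp_neg_ereal (fenchel_dual D g t)"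
proof (rule le_exp_neg_fenchel_dual)
  fix \<alpha> assume "\<alpha> \<in> D"
  with \<open>D \<subseteq> {0<..}\<close> have "\<alpha> > 0" by auto
  have "prob {\<omega>\<in>space M. Y \<omega> > m + t} \<le> exp (- \<alpha> * (m + t)) * expectation (\<lambda>\<omega>. exp (\<alpha> * Y \<omega>))"
    using \<open>Y \<in> borel_measurable M\<close> \<open>\<alpha> > 0\<close> int_exp[OF \<open>\<alpha> \<in> D\<close>] by (rule Chernoff_ineq_gt)
  also have "\<dots> \<le> exp (- \<alpha> * (m + t)) * exp (\<alpha> * m + g \<alpha>)"
    using mgf[OF \<open>\<alpha> \<in> D\<close>] by simp
  also have "\<dots> = exp (- (t * \<alpha> - g \<alpha>))"
    by (simp add: algebra_simps flip: exp_add)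
  finally show "prob {\<omega>\<in>space M. Y \<omega> > m + t} \<le> exp (- (t * \<alpha> - g \<alpha>))" .
qed (use \<open>D \<noteq> {}\<close> in auto)

theorem corollary2p5:
  fixes M :: "'w measure" and X :: "'w \<Rightarrow> real ^ 'n"
    and f :: "real ^ 'n \<Rightarrow> ennreal" and \<phi> :: "real ^ 'n \<Rightarrow> real"
    and a b :: real and c :: "real \<Rightarrow> real"
  assumes "prob_space M"
    and "distributed M lborel X f"
    and "\<phi> \<in> borel_measurable borel"
    and "a > 0" and "b > 0"
    and "\<forall>\<alpha>\<in>{-a<..<b}. integrable M (\<lambda>\<omega>. exp (\<alpha> * \<phi> (X \<omega>)))"
    and "smooth_on_real {-a<..<b} c"
    and "log_concave_on {-a<..<b}
           (\<lambda>\<alpha>. exp (- c \<alpha>) * (\<integral>\<omega>. exp (\<alpha> * \<phi> (X \<omega>)) \<partial>M))"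
  defines "\<psi> \<equiv> (\<lambda>\<alpha>. c \<alpha> - c 0 - deriv c 0 * \<alpha>)"
  shows "\<forall>t>0.
     ereal (measure M {\<omega>\<in>space M. \<phi> (X \<omega>) - (\<integral>\<omega>'. \<phi> (X \<omega>') \<partial>M) > t})
        \<le> exp_neg_ereal (fenchel_dual {0<..<b} \<psi> t)
   \<and> ereal (measure M {\<omega>\<in>space M. \<phi> (X \<omega>) - (\<integral>\<omega>'. \<phi> (X \<omega>') \<partial>M) < - t})
        \<le> exp_neg_ereal (fenchel_dual {-a<..<0} \<psi> (- t))"
proof (intro allI impI conjI)
  interpret prob_space M by fact
  define Y where "Y = (\<lambda>\<omega>. \<phi> (X \<omega>))"
  define m where "m = expectation Y"
  have Y_meas: "Y \<in> borel_measurable M"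
    unfolding Y_def using measurable_compose[OF distributed_measurable[OF assms(2)]] assms(3)
    by simp
  have der: "(c has_real_derivative deriv c 0) (at 0)"
    using assms(4,5,7) by (intro smooth_on_real_has_deriv) auto
  have mgf: "expectation (\<lambda>\<omega>. exp (\<alpha> * Y \<omega>)) \<le> exp (\<alpha> * m + \<psi> \<alpha>)" if "\<alpha> \<in> {-a<..<b}" for \<alpha>
    using mgf_le_of_log_concave_tilt[OF Y_meas _ _ _ der _ that] assms(4-6,8)
    unfolding Y_def m_def \<psi>_def by auto
  fix t :: real
  show "ereal (measure M {\<omega>\<in>space M. \<phi> (X \<omega>) - (\<integral>\<omega>'. \<phi> (X \<omega>') \<partial>M) > t})
    \<le> exp_neg_ereal (fenchel_dual {0<..<b} \<psi> t)"
  proof -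
    have "ereal (prob {\<omega>\<in>space M. Y \<omega> > m + t}) \<le> exp_neg_ereal (fenchel_dual {0<..<b} \<psi> t)"
      using Y_meas assms(4-6) mgf by (intro prob_tail_le_exp_neg_fenchel_dual) (auto simp: Y_def)
    then show ?thesis by (simp add: Y_def m_def algebra_simps)
  qed
  \<comment> \<open>The lower tail of \<open>Y\<close> is the upper tail of \<open>-Y\<close>, whose dual is taken over the reflected interval.\<close>
  have "ereal (prob {\<omega>\<in>space M. - Y \<omega> > - m + t})
    \<le> exp_neg_ereal (fenchel_dual (uminus ` {-a<..<0}) (\<lambda>\<alpha>. \<psi> (- \<alpha>)) t)"
  proof (rule prob_tail_le_exp_neg_fenchel_dual)
    fix \<alpha> assume "\<alpha> \<in> uminus ` {-a<..<0}"
    then have \<alpha>: "- \<alpha> \<in> {-a<..<b}" using assms(5) by auto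
    show "integrable M (\<lambda>\<omega>. exp (\<alpha> * - Y \<omega>))"
      using bspec[OF assms(6) \<alpha>] by (simp add: Y_def)
    show "expectation (\<lambda>\<omega>. exp (\<alpha> * - Y \<omega>)) \<le> exp (\<alpha> * - m + \<psi> (- \<alpha>))"
      using mgf[OF \<alpha>] by simp
  qed (use Y_meas assms(4) in auto)
  then show "ereal (measure M {\<omega>\<in>space M. \<phi> (X \<omega>) - (\<integral>\<omega>'. \<phi> (X \<omega>') \<partial>M) < - t})
    \<le> exp_neg_ereal (fenchel_dual {-a<..<0} \<psi> (- t))"
    unfolding fenchel_dual_uminus by (simp add: Y_def m_def algebra_simps)
qed

end
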